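(* Let $S\subset\mathbb{R}^3$ be a $C^3$ surface and let $\Gamma$ be a closed asymptotic curve of $S$ contained in the region $\{K<0\}$. Let $(x,t)\in[0,x_0)\times[0,t_0)$ be a semi-global coordinate system near $\Gamma$ (periodic in $x$ with period $x_0$) such that $\{t=0\}$ is $\Gamma$ and each curve $\{t=\mathrm{const}\}$ is a closed curve homotopic to $\Gamma$, and write the second fundamental form as $II=L\,dx^2+2M\,dx\,dt+N\,dt^2$ (so $L(x,0)=0$ and $M(x,0)\neq0$). Then $$\int_{0}^{x_{0}}M^{-1}\,\partial_{t}L(x,0)\,dx=\pm\int_{\Gamma}k_{g}k_{n}|K|^{-1/2}\,ds,$$ where the sign is fixed (determined by the sign of $M$ along $\Gamma$).
   Context: $K$ is Gaussian curvature. An asymptotic curve is a curve whose tangent direction has zero normal curvature at every point. $k_g$ is the geodesic curvature of $\Gamma$, $k_n$ is the normal curvature of $S$ in the direction tangent to $S$ and perpendicular to $\Gamma$, and $ds$ is arclength along $\Gamma$. *)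

theory Defs
  imports "HOL-Analysis.Analysis"
begin

(* Coordinate domain of a semi-global coordinate system (x,t): x in R (periodic), 0 <= t < t0 *)
definition strip :: "real \<Rightarrow> (real \<times> real) set" where
  "strip t0 = UNIV \<times> {0..<t0}"

(* partial derivatives relative to a domain D (one-sided where D has a boundary) *)
definition pdx :: "(real \<times> real) set \<Rightarrow> (real \<times> real \<Rightarrow> 'a::real_normed_vector) \<Rightarrow> real \<times> real \<Rightarrow> 'a" where
  "pdx D f p = vector_derivative (\<lambda>s. f (s, snd p)) (at (fst p) within {s. (s, snd p) \<in> D})"

definition pdt :: "(real \<times> real) set \<Rightarrow> (real \<times> real \<Rightarrow> 'a::real_normed_vector) \<Rightarrow> real \<times> real \<Rightarrow> 'a" where
  "pdt D f p = vector_derivative (\<lambda>s. f (fst p, s)) (at (snd p) within {s. (fst p, s) \<in> D})"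

fun Ck_on :: "nat \<Rightarrow> (real \<times> real) set \<Rightarrow> (real \<times> real \<Rightarrow> 'a::real_normed_vector) \<Rightarrow> bool" where
  "Ck_on 0 D f = continuous_on D f"
| "Ck_on (Suc k) D f =
     (continuous_on D f \<and>
      (\<forall>p\<in>D. ((\<lambda>s. f (s, snd p)) has_vector_derivative pdx D f p) (at (fst p) within {s. (s, snd p) \<in> D})
            \<and> ((\<lambda>s. f (fst p, s)) has_vector_derivative pdt D f p) (at (snd p) within {s. (fst p, s) \<in> D}))
      \<and> Ck_on k D (pdx D f) \<and> Ck_on k D (pdt D f))"

definition unit_normal :: "(real \<times> real) set \<Rightarrow> (real \<times> real \<Rightarrow> real^3) \<Rightarrow> real \<times> real \<Rightarrow> real^3" where
  "unit_normal D X p = (1 / norm (cross3 (pdx D X p) (pdt D X p))) *\<^sub>R cross3 (pdx D X p) (pdt D X p)"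

definition fff_E where "fff_E D X p = pdx D X p \<bullet> pdx D X p"
definition fff_F where "fff_F D X p = pdx D X p \<bullet> pdt D X p"
definition fff_G where "fff_G D X p = pdt D X p \<bullet> pdt D X p"

definition sff_L :: "(real \<times> real) set \<Rightarrow> (real \<times> real \<Rightarrow> real^3) \<Rightarrow> real \<times> real \<Rightarrow> real" where
  "sff_L D X p = pdx D (pdx D X) p \<bullet> unit_normal D X p"
definition sff_M :: "(real \<times> real) set \<Rightarrow> (real \<times> real \<Rightarrow> real^3) \<Rightarrow> real \<times> real \<Rightarrow> real" where
  "sff_M D X p = pdt D (pdx D X) p \<bullet> unit_normal D X p"
definition sff_N :: "(real \<times> real) set \<Rightarrow> (real \<times> real \<Rightarrow> real^3) \<Rightarrow> real \<times> real \<Rightarrow> real" where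
  "sff_N D X p = pdt D (pdt D X) p \<bullet> unit_normal D X p"

(* II evaluated on the tangent vector a X_x + b X_t *)
definition sff_form :: "(real \<times> real) set \<Rightarrow> (real \<times> real \<Rightarrow> real^3) \<Rightarrow> real \<times> real \<Rightarrow> real \<Rightarrow> real \<Rightarrow> real" where
  "sff_form D X p a b = sff_L D X p * a\<^sup>2 + 2 * sff_M D X p * a * b + sff_N D X p * b\<^sup>2"

definition normal_curv :: "(real \<times> real) set \<Rightarrow> (real \<times> real \<Rightarrow> real^3) \<Rightarrow> real \<times> real \<Rightarrow> real \<Rightarrow> real \<Rightarrow> real" where
  "normal_curv D X p a b = sff_form D X p a b / (norm (a *\<^sub>R pdx D X p + b *\<^sub>R pdt D X p))\<^sup>2"

definition gauss_curv :: "(real \<times> real) set \<Rightarrow> (real \<times> real \<Rightarrow> real^3) \<Rightarrow> real \<times> real \<Rightarrow> real" where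
  "gauss_curv D X p = (sff_L D X p * sff_N D X p - (sff_M D X p)\<^sup>2) /
                      (fff_E D X p * fff_G D X p - (fff_F D X p)\<^sup>2)"

(* normal curvature k_n in the tangent direction perpendicular to the x-curve through p:
   that direction is X_t - (F/E) X_x *)
definition normal_curv_perp :: "(real \<times> real) set \<Rightarrow> (real \<times> real \<Rightarrow> real^3) \<Rightarrow> real \<times> real \<Rightarrow> real" where
  "normal_curv_perp D X p = normal_curv D X p (- fff_F D X p / fff_E D X p) 1"

(* signed geodesic curvature of the x-curve s \<mapsto> X(s,t) (oriented by increasing x, w.r.t. the normal n):
   k_g = gamma'' . (n \<times> gamma') / |gamma'|^3 *)
definition geod_curv_x :: "(real \<times> real) set \<Rightarrow> (real \<times> real \<Rightarrow> real^3) \<Rightarrow> real \<times> real \<Rightarrow> real" where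
  "geod_curv_x D X p = (pdx D (pdx D X) p \<bullet> cross3 (unit_normal D X p) (pdx D X p)) / (norm (pdx D X p)) ^ 3"

end

theory Submission
  imports Defs
begin

(* Along the asymptotic curve \<Gamma> = {t = 0} we have L = 0 and M \<noteq> 0.
   The integrand M^(-1) L_t differs from the derivative of the "boundary potential"
     g(x) = ln |M| + ln |X_x \<times> X_t| - ln |X_x|^2
   by exactly -sgn M * k_g k_n |K|^(-1/2) |X_x|; this is a pointwise computation with the
   3-jet of X at (x,0), in which the mixed derivatives X_xt = X_tx and X_xxt = X_xtx must be
   identified (Schwarz's theorem on the boundary of the strip).  Since g is x0-periodic, its
   derivative integrates to 0 over one period; since M has no zeros on \<Gamma>, its sign is
   constant, and the identity of integrals follows (ds = |X_x| dx). *)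

lemma has_vector_derivative_cross3:
  fixes a b :: "real \<Rightarrow> real^3"
  assumes "(a has_vector_derivative a') (at s within S)" "(b has_vector_derivative b') (at s within S)"
  shows "((\<lambda>r. cross3 (a r) (b r)) has_vector_derivative cross3 (a s) b' + cross3 a' (b s)) (at s within S)"
  using bounded_bilinear.has_vector_derivative[OF bilinear_conv_bounded_bilinear[THEN iffD1, OF bilinear_cross] assms] .

lemma has_real_derivative_inner:
  fixes a b :: "real \<Rightarrow> 'a::real_inner"
  assumes "(a has_vector_derivative a') (at s within S)" "(b has_vector_derivative b') (at s within S)"
  shows "((\<lambda>r. a r \<bullet> b r) has_real_derivative a s \<bullet> b' + a' \<bullet> b s) (at s within S)"
  using bounded_bilinear.has_vector_derivative[OF bounded_bilinear_inner assms]
  by (simp add: has_real_derivative_iff_has_vector_derivative)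

lemma has_real_derivative_norm:
  fixes c :: "real \<Rightarrow> 'a::real_inner"
  assumes c: "(c has_vector_derivative c') (at s within S)" and nz: "c s \<noteq> 0"
  shows "((\<lambda>r. norm (c r)) has_real_derivative (c s \<bullet> c') / norm (c s)) (at s within S)"
proof -
  have "((\<lambda>r. norm (c r)) has_derivative (\<lambda>h. sgn (c s) \<bullet> (h *\<^sub>R c'))) (at s within S)"
    using has_derivative_compose[OF c[unfolded has_vector_derivative_def] has_derivative_norm[OF nz]]
    by (simp add: o_def inner_commute)
  moreover have "(\<lambda>h. sgn (c s) \<bullet> (h *\<^sub>R c')) = (*) ((c s \<bullet> c') / norm (c s))"
    by (auto simp: sgn_div_norm inner_commute divide_inverse fun_eq_iff)
  ultimately show ?thesis
    unfolding has_field_derivative_def by simp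
qed

lemma has_real_derivative_ln_abs:
  fixes h :: "real \<Rightarrow> real"
  assumes "(h has_real_derivative h') (at s within S)" "h s \<noteq> 0"
  shows "((\<lambda>r. ln \<bar>h r\<bar>) has_real_derivative h' / h s) (at s within S)"
proof -
  have "((\<lambda>r. norm (h r)) has_real_derivative (h s * h') / \<bar>h s\<bar>) (at s within S)"
    using has_real_derivative_norm[of h h' s S] assms
    by (simp add: has_real_derivative_iff_has_vector_derivative)
  from DERIV_chain2[OF DERIV_ln_divide this] assms(2)
  show ?thesis by (simp add: field_simps abs_mult_self_eq)
qed

(* The derivative of the normalisation c/|c| of a curve c, in the direction of the velocity c'. *)
definition unit_deriv :: "'a::real_inner \<Rightarrow> 'a \<Rightarrow> 'a" where
  "unit_deriv c c' = (1 / norm c) *\<^sub>R c' - ((c \<bullet> c') / norm c ^ 3) *\<^sub>R c"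

lemma has_vector_derivative_unit:
  fixes c :: "real \<Rightarrow> 'a::real_inner"
  assumes c: "(c has_vector_derivative c') (at s within S)" and nz: "c s \<noteq> 0"
  shows "((\<lambda>r. (1 / norm (c r)) *\<^sub>R c r) has_vector_derivative unit_deriv (c s) c') (at s within S)"
proof -
  have "((\<lambda>r. inverse (norm (c r))) has_real_derivative
      - ((c s \<bullet> c') / norm (c s) * inverse (norm (c s) ^ 2))) (at s within S)"
    using DERIV_inverse_fun[OF has_real_derivative_norm[OF c nz]] nz by (simp add: power2_eq_square)
  from has_vector_derivative_scaleR[OF this c] show ?thesis
    by (simp add: unit_deriv_def inverse_eq_divide power3_eq_cube power2_eq_square mult.assoc)
qed

lemma Ck_on_Suc_imp: "Ck_on (Suc k) D f \<Longrightarrow> Ck_on k D f"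
proof (induction k arbitrary: f)
  case 0 then show ?case by simp
next
  case (Suc k)
  then show ?case
    unfolding Ck_on.simps(2)[of "Suc k"] Ck_on.simps(2)[of k] by blast
qed

lemma Ck_on_imp_continuous: "Ck_on k D f \<Longrightarrow> continuous_on D f"
  by (cases k) auto

lemma Ck_on_partials:
  assumes "Ck_on (Suc k) D f"
  shows "Ck_on k D (pdx D f)" "Ck_on k D (pdt D f)"
  using assms by simp_all

lemma Ck_on_strip_derivs:
  assumes "Ck_on (Suc k) (strip t0) f" "0 \<le> t" "t < t0"
  shows "((\<lambda>s. f (s, t)) has_vector_derivative pdx (strip t0) f (x, t)) (at x)"
    and "((\<lambda>s. f (x, s)) has_vector_derivative pdt (strip t0) f (x, t)) (at t within {0..<t0})"
proof -
  have p: "(x, t) \<in> strip t0" and sets: "{s. (s, t) \<in> strip t0} = UNIV" "{s. (x, s) \<in> strip t0} = {0..<t0}"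
    using assms(2,3) by (auto simp: strip_def)
  have "((\<lambda>s. f (s, t)) has_vector_derivative pdx (strip t0) f (x, t)) (at x within {s. (s, t) \<in> strip t0})
      \<and> ((\<lambda>s. f (x, s)) has_vector_derivative pdt (strip t0) f (x, t)) (at t within {s. (x, s) \<in> strip t0})"
    using bspec[OF conjunct1[OF conjunct2[OF assms(1)[unfolded Ck_on.simps(2)]]] p] by simp
  then show "((\<lambda>s. f (s, t)) has_vector_derivative pdx (strip t0) f (x, t)) (at x)"
    "((\<lambda>s. f (x, s)) has_vector_derivative pdt (strip t0) f (x, t)) (at t within {0..<t0})"
    unfolding sets by simp_all
qed

lemma at_within_strip_nontrivial:
  fixes t t0 :: real
  assumes "0 \<le> t" "t < t0"
  shows "at t within {0..<t0} \<noteq> bot"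
  using assms islimpt_Ico[of 0 t0 t] by (simp add: trivial_limit_within)

lemma t_derivative_unique:
  fixes h1 h2 :: "real \<Rightarrow> 'a::real_normed_vector"
  assumes t: "0 \<le> t" "t < t0" and eq: "\<And>s. 0 \<le> s \<Longrightarrow> s < t0 \<Longrightarrow> h1 s = h2 s"
    and d1: "(h1 has_vector_derivative d1) (at t within {0..<t0})"
    and d2: "(h2 has_vector_derivative d2) (at t within {0..<t0})"
  shows "d1 = d2"
proof -
  have "(h2 has_vector_derivative d1) (at t within {0..<t0})"
    by (rule has_vector_derivative_transform[OF _ _ d1]) (use t eq in auto)
  from vector_derivative_unique_within[OF at_within_strip_nontrivial[OF t] this d2] show ?thesis .
qed

lemma pdt_strip_eq:
  assumes "0 \<le> t" "t < t0" and "((\<lambda>s. f (x, s)) has_vector_derivative d) (at t within {0..<t0})"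
  shows "pdt (strip t0) f (x, t) = d"
proof -
  have "{s. (x, s) \<in> strip t0} = {0..<t0}" by (auto simp: strip_def)
  then show ?thesis
    using vector_derivative_within[OF at_within_strip_nontrivial[OF assms(1,2)] assms(3)]
    by (simp add: pdt_def)
qed

lemma has_vector_derivative_periodic:
  fixes h :: "real \<Rightarrow> 'a::real_normed_vector"
  assumes per: "\<And>y. h (y + p) = h y" and d: "(h has_vector_derivative d) (at x)"
  shows "(h has_vector_derivative d) (at (x + p))"
proof -
  have "h = h \<circ> (\<lambda>y. y - p)"
    using per[of "_ - p"] by (auto simp: fun_eq_iff)
  moreover have "((\<lambda>y. y - p) has_vector_derivative 1) (at (x + p))"
    by (rule derivative_eq_intros | simp)+
  ultimately show ?thesis
    using vector_diff_chain_at[of "\<lambda>y. y - p" 1 "x + p" h d] d by simp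
qed

definition x_periodic :: "real \<Rightarrow> real \<Rightarrow> (real \<times> real \<Rightarrow> 'a) \<Rightarrow> bool" where
  "x_periodic t0 x0 f \<longleftrightarrow> (\<forall>x t. 0 \<le> t \<and> t < t0 \<longrightarrow> f (x + x0, t) = f (x, t))"

lemma x_periodic_partials:
  assumes C: "Ck_on (Suc k) (strip t0) f" and per: "x_periodic t0 x0 f"
  shows "x_periodic t0 x0 (pdx (strip t0) f)" and "x_periodic t0 x0 (pdt (strip t0) f)"
proof -
  have "pdx (strip t0) f (x + x0, t) = pdx (strip t0) f (x, t) \<and> pdt (strip t0) f (x + x0, t) = pdt (strip t0) f (x, t)"
    if t: "0 \<le> t" "t < t0" for x t
  proof
    have "f (y + x0, t) = f (y, t)" for y using per t by (simp add: x_periodic_def)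
    from has_vector_derivative_periodic[where h="\<lambda>y. f (y, t)", OF this Ck_on_strip_derivs(1)[OF C t]]
    show "pdx (strip t0) f (x + x0, t) = pdx (strip t0) f (x, t)"
      using vector_derivative_unique_at Ck_on_strip_derivs(1)[OF C t] by blast
    show "pdt (strip t0) f (x + x0, t) = pdt (strip t0) f (x, t)"
      by (rule t_derivative_unique[OF t _ Ck_on_strip_derivs(2)[OF C t] Ck_on_strip_derivs(2)[OF C t]])
         (use per in \<open>simp add: x_periodic_def\<close>)
  qed
  then show "x_periodic t0 x0 (pdx (strip t0) f)" "x_periodic t0 x0 (pdt (strip t0) f)"
    unfolding x_periodic_def by blast+
qed

lemma continuous_on_strip_slice:
  assumes "continuous_on (strip t0) g" "S \<subseteq> {0..<t0}"
  shows "continuous_on S (\<lambda>s. g (y, s))"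
proof -
  have "continuous_on S (\<lambda>s. (y, s))" by (intro continuous_intros)
  moreover have "(\<lambda>s. (y, s)) ` S \<subseteq> strip t0" using assms(2) by (auto simp: strip_def)
  ultimately show ?thesis using continuous_on_compose2[OF assms(1)] by blast
qed

lemma strip_integral_t:
  fixes f :: "real \<times> real \<Rightarrow> 'a::banach"
  assumes C: "Ck_on (Suc k) (strip t0) f" and t: "0 \<le> t" "t < t0"
  shows "f (y, t) = f (y, 0) + integral {0..t} (\<lambda>s. pdt (strip t0) f (y, s))"
proof -
  have "((\<lambda>s. pdt (strip t0) f (y, s)) has_integral (f (y, t) - f (y, 0))) {0..t}"
  proof (rule fundamental_theorem_of_calculus[OF t(1)])
    fix s assume "s \<in> {0..t}"
    then have s: "0 \<le> s" "s < t0" and sub: "{0..t} \<subseteq> {0..<t0}" using t by auto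
    show "((\<lambda>s. f (y, s)) has_vector_derivative pdt (strip t0) f (y, s)) (at s within {0..t})"
      using has_vector_derivative_within_subset[OF Ck_on_strip_derivs(2)[OF C s] sub] .
  qed
  then show ?thesis by (simp add: integral_unique)
qed

lemma strip_pdx_integral_t:
  fixes f :: "real \<times> real \<Rightarrow> 'a::banach"
  assumes C: "Ck_on (Suc (Suc k)) (strip t0) f" and t: "0 \<le> t" "t < t0"
  shows "pdx (strip t0) f (x, t) = pdx (strip t0) f (x, 0) + integral {0..t} (\<lambda>s. pdx (strip t0) (pdt (strip t0) f) (x, s))"
proof -
  define v where "v = pdt (strip t0) f"
  define w where "w = pdx (strip t0) v"
  have Cv: "Ck_on (Suc k) (strip t0) v" using C by (simp add: v_def)
  have cw: "continuous_on (strip t0) w"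
    using Ck_on_imp_continuous[OF Ck_on_partials(1)[OF Cv]] by (simp add: w_def)
  have sub: "{0..t} \<subseteq> {0..<t0}" using t by auto
  have "((\<lambda>y. integral (cbox 0 t) (\<lambda>s. v (y, s))) has_vector_derivative integral (cbox 0 t) (\<lambda>s. w (x, s))) (at x within UNIV)"
  proof (rule leibniz_rule_vector_derivative[where f="\<lambda>y s. v (y, s)" and fx="\<lambda>y s. w (y, s)"])
    fix y s assume "s \<in> cbox 0 t"
    then have "0 \<le> s" "s < t0" using t by auto
    then show "((\<lambda>y. v (y, s)) has_vector_derivative w (y, s)) (at y within UNIV)"
      using Ck_on_strip_derivs(1)[OF Cv] by (simp add: w_def)
  next
    fix y
    show "(\<lambda>s. v (y, s)) integrable_on cbox 0 t"
      using continuous_on_strip_slice[OF Ck_on_imp_continuous[OF Cv] sub]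
      by (simp add: integrable_continuous_real)
  next
    have "UNIV \<times> {0..t} \<subseteq> strip t0" using t by (auto simp: strip_def)
    then show "continuous_on (UNIV \<times> cbox 0 t) (\<lambda>(y, s). w (y, s))"
      using continuous_on_subset[OF cw] by simp
  qed simp_all
  then have "((\<lambda>y. f (y, 0) + integral {0..t} (\<lambda>s. v (y, s))) has_vector_derivative
      pdx (strip t0) f (x, 0) + integral {0..t} (\<lambda>s. w (x, s))) (at x)"
    using Ck_on_strip_derivs(1)[OF C order.refl] t by (auto intro: has_vector_derivative_add simp: cbox_interval)
  moreover have "(\<lambda>y. f (y, 0) + integral {0..t} (\<lambda>s. v (y, s))) = (\<lambda>y. f (y, t))"
    using strip_integral_t[OF C t] by (simp add: v_def)
  ultimately show ?thesis
    using vector_derivative_unique_at[OF Ck_on_strip_derivs(1)[OF C t]] by (simp add: v_def w_def)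
qed

(* Schwarz's theorem on the boundary line t = 0: differentiating the previous formula in t
  at t = 0 gives f_xt(x,0) = f_tx(x,0).  The one-sided setting is why it is proved here. *)
lemma schwarz_boundary:
  fixes f :: "real \<times> real \<Rightarrow> 'a::banach"
  assumes C: "Ck_on (Suc (Suc k)) (strip t0) f" and t0: "t0 > 0"
  shows "pdt (strip t0) (pdx (strip t0) f) (x, 0) = pdx (strip t0) (pdt (strip t0) f) (x, 0)"
proof -
  define u where "u = pdx (strip t0) f"
  define w where "w = pdx (strip t0) (pdt (strip t0) f)"
  define b where "b = t0 / 2"
  have b: "0 < b" "{0..b} \<subseteq> {0..<t0}" using t0 by (auto simp: b_def)
  have "continuous_on (strip t0) w"
    using Ck_on_imp_continuous[OF Ck_on_partials(1)[OF Ck_on_partials(2)[OF C]]] by (simp add: w_def)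
  then have "continuous_on {0..b} (\<lambda>s. w (x, s))"
    using continuous_on_strip_slice[OF _ b(2)] by blast
  then have "((\<lambda>t. integral {0..t} (\<lambda>s. w (x, s))) has_vector_derivative w (x, 0)) (at 0 within {0..b})"
    using integral_has_vector_derivative[of 0 b "\<lambda>s. w (x, s)" 0] b(1) by simp
  from has_vector_derivative_add[OF has_vector_derivative_const this]
  have d0: "((\<lambda>t. u (x, 0) + integral {0..t} (\<lambda>s. w (x, s))) has_vector_derivative w (x, 0)) (at 0 within {0..b})"
    by simp
  have eqs: "u (x, t) = u (x, 0) + integral {0..t} (\<lambda>s. w (x, s))" if "t \<in> {0..b}" for t
  proof -
    have "0 \<le> t" "t < t0" using that b(2) by auto
    from strip_pdx_integral_t[OF C this] show ?thesis unfolding u_def w_def .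
  qed
  have lim: "((\<lambda>t. u (x, t)) has_vector_derivative w (x, 0)) (at 0 within {0..b})"
    by (rule has_vector_derivative_transform[OF _ eqs d0]) (use b(1) in simp)
  have "((\<lambda>t. u (x, t)) has_vector_derivative pdt (strip t0) u (x, 0)) (at 0 within {0..b})"
    using has_vector_derivative_within_subset[OF Ck_on_strip_derivs(2)[OF Ck_on_partials(1)[OF C] order.refl t0] b(2)]
    by (simp add: u_def)
  moreover have "at (0::real) within {0..b} \<noteq> bot"
    using at_within_Icc_at_right[OF b(1)] by simp
  ultimately show ?thesis
    using vector_derivative_unique_within lim unfolding u_def w_def by blast
qed

(* At a point, the 2-jet of X is given by e = X_x, f = X_t,
  P = X_xx, Q = X_xt, T = X_tt; frame_normal e f is the unit normal and curvature_density
  is k_g k_n |K|^(-1/2) |X_x|, written in terms of this jet exactly as the definitions of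
  geod_curv_x, normal_curv_perp and gauss_curv unfold (see curvature_density_eq). *)
definition frame_normal :: "real^3 \<Rightarrow> real^3 \<Rightarrow> real^3" where
  "frame_normal e f = (1 / norm (cross3 e f)) *\<^sub>R cross3 e f"

definition curvature_density :: "real^3 \<Rightarrow> real^3 \<Rightarrow> real^3 \<Rightarrow> real^3 \<Rightarrow> real^3 \<Rightarrow> real" where
  "curvature_density e f P Q T =
     (let n = frame_normal e f; l = - (e \<bullet> f) / (e \<bullet> e) in
      (P \<bullet> cross3 n e / norm e ^ 3)
      * (((P \<bullet> n) * l\<^sup>2 + 2 * (Q \<bullet> n) * l * 1 + (T \<bullet> n) * 1\<^sup>2) / (norm (l *\<^sub>R e + 1 *\<^sub>R f))\<^sup>2)
      * \<bar>((P \<bullet> n) * (T \<bullet> n) - (Q \<bullet> n)\<^sup>2) / ((e \<bullet> e) * (f \<bullet> f) - (e \<bullet> f)\<^sup>2)\<bar> powr (-1/2)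
      * norm e)"

lemma cramer3:
  fixes e f P c :: "real^3"
  shows "(cross3 e f \<bullet> c) *\<^sub>R P = (cross3 P f \<bullet> c) *\<^sub>R e + (cross3 e P \<bullet> c) *\<^sub>R f + (cross3 e f \<bullet> P) *\<^sub>R c"
  by (simp add: cross3_simps forall_3)

lemma tangent_decomposition:
  fixes e f P :: "real^3"
  assumes c0: "cross3 e f \<noteq> 0" and tangent: "P \<bullet> cross3 e f = 0"
  shows "\<exists>a b. P = a *\<^sub>R e + b *\<^sub>R f"
proof -
  define c where "c = cross3 e f"
  have cramer: "(c \<bullet> c) *\<^sub>R P = (cross3 P f \<bullet> c) *\<^sub>R e + (cross3 e P \<bullet> c) *\<^sub>R f"
    using cramer3[of e f c P] tangent by (simp add: c_def inner_commute)
  have "c \<bullet> c \<noteq> 0" using c0 by (simp add: c_def)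
  then have "P = (1 / (c \<bullet> c)) *\<^sub>R ((c \<bullet> c) *\<^sub>R P)" by simp
  also have "\<dots> = ((cross3 P f \<bullet> c) / (c \<bullet> c)) *\<^sub>R e + ((cross3 e P \<bullet> c) / (c \<bullet> c)) *\<^sub>R f"
    unfolding cramer by (simp add: scaleR_add_right)
  finally show ?thesis by blast
qed

(* For tangent P = a e + b f, the triple products that appear in L_t - M_x reduce to
  the normal components T.(e x f) and Q.(e x f). *)
lemma triple_product_reduction:
  fixes e f P Q T :: "real^3"
  assumes "P = a *\<^sub>R e + b *\<^sub>R f"
  shows "P \<bullet> (cross3 e T + cross3 Q f) - Q \<bullet> (cross3 e Q + cross3 P f)
       = - b * (T \<bullet> cross3 e f) - 2 * a * (Q \<bullet> cross3 e f)"
  unfolding assms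
  by (simp add: inner_add_left inner_add_right cross_add_left cross_add_right cross_mult_left
      cross_mult_right dot_cross_self cross3_simps algebra_simps)

lemma powr_neg_half_square:
  fixes r :: real
  assumes "r \<noteq> 0"
  shows "(r\<^sup>2) powr (-1/2) = 1 / \<bar>r\<bar>"
proof -
  have "(r\<^sup>2) powr (-1/2) = inverse ((r\<^sup>2) powr (1/2))"
    using powr_minus[of "r\<^sup>2" "1/2"] by simp
  also have "\<dots> = 1 / \<bar>r\<bar>"
    using assms by (simp add: powr_half_sqrt inverse_eq_divide)
  finally show ?thesis .
qed

lemma curvature_density_tangent:
  fixes e f P Q T :: "real^3"
  assumes c0: "cross3 e f \<noteq> 0" and P: "P = a *\<^sub>R e + b *\<^sub>R f" and q0: "Q \<bullet> cross3 e f \<noteq> 0"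
  shows "curvature_density e f P Q T
       = sgn (Q \<bullet> cross3 e f) * b * ((T \<bullet> cross3 e f) / (Q \<bullet> cross3 e f) - 2 * (e \<bullet> f) / (e \<bullet> e))"
proof -
  define c where "c = cross3 e f"
  define w where "w = norm c"
  define q where "q = Q \<bullet> c"
  define tt where "tt = T \<bullet> c"
  define E where "E = e \<bullet> e"
  define F where "F = e \<bullet> f"
  have n: "frame_normal e f = (1 / w) *\<^sub>R c" by (simp add: frame_normal_def c_def w_def)
  have w: "w > 0" and q: "q \<noteq> 0" using c0 q0 by (simp_all add: w_def c_def q_def)
  have E: "E > 0" and ne: "norm e > 0" using c0 by (auto simp: E_def)
  have ne3: "norm e ^ 3 = E * norm e"
    by (simp add: E_def power3_eq_cube flip: power2_norm_eq_inner power2_eq_square)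
  have lagrange: "E * (f \<bullet> f) - F\<^sup>2 = w\<^sup>2"
    using norm_cross_dot[of e f] by (simp add: w_def c_def E_def F_def power2_norm_eq_inner power_mult_distrib)
  have Pn: "P \<bullet> c = 0" unfolding P c_def by (simp add: inner_add_left dot_cross_self)
  have Pne: "P \<bullet> cross3 c e = b * w\<^sup>2"
    unfolding P c_def w_def power2_norm_eq_inner by (simp add: inner_add_left cross3_simps)
  have nrm: "(norm ((- F / E) *\<^sub>R e + 1 *\<^sub>R f))\<^sup>2 = w\<^sup>2 / E"
  proof -
    have "(norm ((- F / E) *\<^sub>R e + 1 *\<^sub>R f))\<^sup>2 = (F / E)\<^sup>2 * E - 2 * (F / E) * F + f \<bullet> f"
      unfolding power2_norm_eq_inner E_def F_def
      by (simp add: inner_add_left inner_add_right inner_commute power2_eq_square algebra_simps)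
    also have "\<dots> = w\<^sup>2 / E" using E lagrange[symmetric] by (simp add: field_simps power2_eq_square)
    finally show ?thesis .
  qed
  have K: "\<bar>(0 * (tt / w) - (q / w)\<^sup>2) / w\<^sup>2\<bar> powr (-1/2) = w\<^sup>2 / \<bar>q\<bar>"
  proof -
    have "\<bar>(0 * (tt / w) - (q / w)\<^sup>2) / w\<^sup>2\<bar> = (q / w\<^sup>2)\<^sup>2"
      using w by (simp add: field_simps power2_eq_square)
    then show ?thesis using powr_neg_half_square[of "q / w\<^sup>2"] q w by (simp add: abs_div)
  qed
  have "curvature_density e f P Q T
      = (b * w / (E * norm e)) * ((2 * (q / w) * (- F / E) + tt / w) / (w\<^sup>2 / E)) * (w\<^sup>2 / \<bar>q\<bar>) * norm e"
    unfolding curvature_density_def Let_def n nrm[unfolded E_def F_def] ne3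
    using w Pn Pne K lagrange
    by (simp add: cross_mult_left q_def tt_def E_def F_def power2_eq_square)
  also have "\<dots> = sgn q * b * (tt / q - 2 * F / E)"
    using w E ne q by (cases "q > 0") (simp_all add: field_simps power2_eq_square)
  finally show ?thesis by (simp add: q_def tt_def c_def F_def E_def)
qed

(* If P = X_xx is tangent (L = 0) and M \<noteq> 0, then
  L_t / M + sgn M * (k_g k_n |K|^(-1/2) |X_x|) = M_x / M + |c|_x / |c| - E_x / E,
  where c = e x f, E = e.e, L_t and M_x are expressed via the derivative of the unit normal
  and R = X_xxt = X_xtx. *)
lemma asymptotic_boundary_identity:
  fixes e f P Q R T :: "real^3"
  defines "c \<equiv> cross3 e f"
  defines "n \<equiv> frame_normal e f"
  defines "ct \<equiv> cross3 e T + cross3 Q f" and "cx \<equiv> cross3 e Q + cross3 P f"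
  assumes c0: "c \<noteq> 0" and tangent: "P \<bullet> c = 0" and q0: "Q \<bullet> c \<noteq> 0"
  shows "(P \<bullet> unit_deriv c ct + R \<bullet> n) / (Q \<bullet> n) + sgn (Q \<bullet> n) * curvature_density e f P Q T
       = (Q \<bullet> unit_deriv c cx + R \<bullet> n) / (Q \<bullet> n) + (c \<bullet> cx) / norm c / norm c - 2 * (e \<bullet> P) / (e \<bullet> e)"
proof -
  obtain a b where P: "P = a *\<^sub>R e + b *\<^sub>R f"
    using tangent_decomposition c0 tangent unfolding c_def by blast
  define w where "w = norm c"
  define q where "q = Q \<bullet> c"
  define tt where "tt = T \<bullet> c"
  define E where "E = e \<bullet> e"
  define F where "F = e \<bullet> f"
  have w: "w > 0" and q: "q \<noteq> 0" using c0 q0 by (simp_all add: w_def q_def)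
  have E: "E > 0" using c0 by (auto simp: E_def c_def)
  have n: "n = (1 / w) *\<^sub>R c" by (simp add: n_def frame_normal_def c_def w_def)
  have Qn: "Q \<bullet> n = q / w" and sgn_Qn: "sgn (Q \<bullet> n) = sgn q"
    using w by (simp_all add: n q_def sgn_divide)
  have Pnt: "P \<bullet> unit_deriv c ct = (P \<bullet> ct) / w"
    using tangent by (simp add: unit_deriv_def w_def inner_diff_right)
  have Qnx: "Q \<bullet> unit_deriv c cx = (Q \<bullet> cx) / w - (c \<bullet> cx) * q / w ^ 3"
    by (simp add: unit_deriv_def w_def q_def inner_diff_right inner_commute)
  have reduction: "P \<bullet> ct = Q \<bullet> cx - b * tt - 2 * a * q"
    using triple_product_reduction[OF P, of T Q] by (simp add: ct_def cx_def tt_def q_def c_def)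
  have eP: "e \<bullet> P = a * E + b * F" by (simp add: P E_def F_def inner_add_right)
  have density: "sgn (Q \<bullet> n) * curvature_density e f P Q T = b * (tt / q - 2 * F / E)"
    using curvature_density_tangent[OF c0[unfolded c_def] P q0[unfolded c_def]] q sgn_Qn
    by (simp add: q_def tt_def c_def E_def F_def sgn_mult_self_eq mult.assoc[symmetric])
  show ?thesis
    unfolding density unfolding Pnt Qnx Qn eP reduction w_def[symmetric] E_def[symmetric]
    using w q E by (simp add: field_simps power2_eq_square power3_eq_cube)
qed

lemma has_vector_derivative_frame_normal:
  fixes e f :: "real \<Rightarrow> real^3"
  assumes e: "(e has_vector_derivative e') (at s within S)" and f: "(f has_vector_derivative f') (at s within S)"
    and nz: "cross3 (e s) (f s) \<noteq> 0"
  shows "((\<lambda>r. frame_normal (e r) (f r)) has_vector_derivative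
           unit_deriv (cross3 (e s) (f s)) (cross3 (e s) f' + cross3 e' (f s))) (at s within S)"
  unfolding frame_normal_def by (rule has_vector_derivative_unit[OF has_vector_derivative_cross3[OF e f] nz])

lemma unit_normal_frame: "unit_normal D X p = frame_normal (pdx D X p) (pdt D X p)"
  by (simp add: unit_normal_def frame_normal_def)

lemma curvature_density_eq:
  "geod_curv_x D X p * normal_curv_perp D X p * \<bar>gauss_curv D X p\<bar> powr (-1/2) * norm (pdx D X p)
   = curvature_density (pdx D X p) (pdt D X p) (pdx D (pdx D X) p) (pdt D (pdx D X) p) (pdt D (pdt D X) p)"
  by (simp add: curvature_density_def Let_def geod_curv_x_def normal_curv_perp_def normal_curv_def
      sff_form_def gauss_curv_def fff_E_def fff_F_def fff_G_def sff_L_def sff_M_def sff_N_def unit_normal_frame)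

lemma pdt_sff_L_boundary:
  fixes X :: "real \<times> real \<Rightarrow> real^3" and t0 x :: real
  defines "D \<equiv> strip t0"
  defines "e \<equiv> pdx D X (x, 0)" and "f \<equiv> pdt D X (x, 0)"
  assumes t0: "t0 > 0" and C3: "Ck_on 3 D X" and c0: "cross3 e f \<noteq> 0"
  shows "pdt D (sff_L D X) (x, 0)
       = pdx D (pdx D X) (x, 0) \<bullet> unit_deriv (cross3 e f) (cross3 e (pdt D (pdt D X) (x, 0)) + cross3 (pdt D (pdx D X) (x, 0)) f)
         + pdt D (pdx D (pdx D X)) (x, 0) \<bullet> frame_normal e f"
proof -
  have C: "Ck_on (Suc (Suc (Suc 0))) (strip t0) X" using C3 by (simp add: D_def numeral_3_eq_3)
  note z = order.refl[of "0::real"] t0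
  have "((\<lambda>s. sff_L D X (x, s)) has_vector_derivative
      pdx D (pdx D X) (x, 0) \<bullet> unit_deriv (cross3 e f) (cross3 e (pdt D (pdt D X) (x, 0)) + cross3 (pdt D (pdx D X) (x, 0)) f)
      + pdt D (pdx D (pdx D X)) (x, 0) \<bullet> frame_normal e f) (at 0 within {0..<t0})"
    unfolding sff_L_def unit_normal_frame e_def f_def D_def
    using has_real_derivative_inner[OF Ck_on_strip_derivs(2)[OF Ck_on_partials(1)[OF Ck_on_partials(1)[OF C]] z]
        has_vector_derivative_frame_normal[OF Ck_on_strip_derivs(2)[OF Ck_on_partials(1)[OF C] z]
          Ck_on_strip_derivs(2)[OF Ck_on_partials(2)[OF C] z] c0[unfolded e_def f_def D_def]]]
    by (simp add: has_real_derivative_iff_has_vector_derivative inner_commute)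
  then show ?thesis
    unfolding D_def by (rule pdt_strip_eq[OF z])
qed

(* Along \<Gamma>, the x-derivative of f_t is f_xt (by Schwarz's theorem at t = 0). *)
lemma pdt_boundary_x_derivative:
  fixes X :: "real \<times> real \<Rightarrow> 'a::banach"
  assumes t0: "t0 > 0" and C: "Ck_on (Suc (Suc k)) (strip t0) X"
  shows "((\<lambda>y. pdt (strip t0) X (y, 0)) has_vector_derivative pdt (strip t0) (pdx (strip t0) X) (x, 0)) (at x)"
  using Ck_on_strip_derivs(1)[OF Ck_on_partials(2)[OF C] order.refl t0] schwarz_boundary[OF C t0] by simp

(* M_x on \<Gamma>, by the product rule and Schwarz: M_x = X_xt . n_x + X_xxt . n. *)
lemma sff_M_boundary_deriv:
  fixes X :: "real \<times> real \<Rightarrow> real^3" and t0 x :: real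
  defines "D \<equiv> strip t0"
  defines "e \<equiv> pdx D X (x, 0)" and "f \<equiv> pdt D X (x, 0)"
  assumes t0: "t0 > 0" and C3: "Ck_on 3 D X" and c0: "cross3 e f \<noteq> 0"
  shows "((\<lambda>y. sff_M D X (y, 0)) has_real_derivative
           pdt D (pdx D X) (x, 0) \<bullet> unit_deriv (cross3 e f) (cross3 e (pdt D (pdx D X) (x, 0)) + cross3 (pdx D (pdx D X) (x, 0)) f)
           + pdt D (pdx D (pdx D X)) (x, 0) \<bullet> frame_normal e f) (at x)"
proof -
  have C: "Ck_on (Suc (Suc (Suc 0))) (strip t0) X" using C3 by (simp add: D_def numeral_3_eq_3)
  note z = order.refl[of "0::real"] t0
  have "((\<lambda>y. pdt D (pdx D X) (y, 0) \<bullet> frame_normal (pdx D X (y, 0)) (pdt D X (y, 0))) has_real_derivative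
           pdt D (pdx D X) (x, 0) \<bullet> unit_deriv (cross3 e f) (cross3 e (pdt D (pdx D X) (x, 0)) + cross3 (pdx D (pdx D X) (x, 0)) f)
           + pdt D (pdx D (pdx D X)) (x, 0) \<bullet> frame_normal e f) (at x)"
    unfolding e_def f_def D_def
    using has_real_derivative_inner[OF pdt_boundary_x_derivative[OF t0 Ck_on_partials(1)[OF C]]
        has_vector_derivative_frame_normal[OF Ck_on_strip_derivs(1)[OF Ck_on_partials(1)[OF C] z]
          pdt_boundary_x_derivative[OF t0 Ck_on_Suc_imp[OF C]] c0[unfolded e_def f_def D_def]]]
    by (simp add: inner_commute)
  then show ?thesis by (simp add: sff_M_def unit_normal_frame)
qed

lemma asymptotic_boundary_frame:
  fixes X :: "real \<times> real \<Rightarrow> real^3" and D :: "(real \<times> real) set" and p :: "real \<times> real"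
  defines "e \<equiv> pdx D X p" and "f \<equiv> pdt D X p"
  assumes c0: "cross3 e f \<noteq> 0" and asymptotic: "normal_curv D X p 1 0 = 0" and neg: "gauss_curv D X p < 0"
  shows "pdx D (pdx D X) p \<bullet> cross3 e f = 0" and "pdt D (pdx D X) p \<bullet> cross3 e f \<noteq> 0"
    and "sff_M D X p \<noteq> 0"
proof -
  have n: "unit_normal D X p = (1 / norm (cross3 e f)) *\<^sub>R cross3 e f"
    by (simp add: unit_normal_def e_def f_def)
  have "e \<noteq> 0" using c0 by auto
  then have L0: "sff_L D X p = 0"
    using asymptotic by (simp add: normal_curv_def sff_form_def e_def)
  then show "pdx D (pdx D X) p \<bullet> cross3 e f = 0"
    using c0 by (simp add: sff_L_def n)
  show M0: "sff_M D X p \<noteq> 0"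
    using neg by (auto simp: gauss_curv_def L0)
  then show "pdt D (pdx D X) p \<bullet> cross3 e f \<noteq> 0"
    by (simp add: sff_M_def n)
qed

(* Its derivative is the
  integrand of the left-hand side plus sgn M times the curvature integrand, so the theorem
  follows by integrating over one period. *)
definition boundary_potential :: "(real \<times> real) set \<Rightarrow> (real \<times> real \<Rightarrow> real^3) \<Rightarrow> real \<Rightarrow> real" where
  "boundary_potential D X x = ln \<bar>sff_M D X (x, 0)\<bar> + ln (norm (cross3 (pdx D X (x, 0)) (pdt D X (x, 0))))
                               - ln (fff_E D X (x, 0))"

lemma boundary_potential_jet_deriv:
  fixes X :: "real \<times> real \<Rightarrow> real^3" and t0 x :: real
  defines "D \<equiv> strip t0"
  defines "e \<equiv> pdx D X (x, 0)" and "f \<equiv> pdt D X (x, 0)" and "P \<equiv> pdx D (pdx D X) (x, 0)"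
    and "Q \<equiv> pdt D (pdx D X) (x, 0)" and "R \<equiv> pdt D (pdx D (pdx D X)) (x, 0)"
  defines "c \<equiv> cross3 e f" and "cx \<equiv> cross3 e Q + cross3 P f"
  assumes t0: "t0 > 0" and C3: "Ck_on 3 D X" and c0: "c \<noteq> 0" and M0: "Q \<bullet> c \<noteq> 0"
  shows "(boundary_potential D X has_real_derivative
           (Q \<bullet> unit_deriv c cx + R \<bullet> frame_normal e f) / (Q \<bullet> frame_normal e f)
           + (c \<bullet> cx) / norm c / norm c - (e \<bullet> P + P \<bullet> e) / (e \<bullet> e)) (at x)"
proof -
  have C: "Ck_on (Suc (Suc (Suc 0))) (strip t0) X" using C3 by (simp add: D_def numeral_3_eq_3)
  have de: "((\<lambda>y. pdx D X (y, 0)) has_vector_derivative P) (at x)"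
    using Ck_on_strip_derivs(1)[OF Ck_on_partials(1)[OF C] order.refl t0] by (simp add: P_def D_def)
  have df: "((\<lambda>y. pdt D X (y, 0)) has_vector_derivative Q) (at x)"
    using pdt_boundary_x_derivative[OF t0 Ck_on_Suc_imp[OF C]] by (simp add: Q_def D_def)
  have dc: "((\<lambda>y. cross3 (pdx D X (y, 0)) (pdt D X (y, 0))) has_vector_derivative cx) (at x)"
    using has_vector_derivative_cross3[OF de df] by (simp add: cx_def e_def f_def)
  have dM: "((\<lambda>y. sff_M D X (y, 0)) has_real_derivative Q \<bullet> unit_deriv c cx + R \<bullet> frame_normal e f) (at x)"
    using sff_M_boundary_deriv[OF t0 C3[unfolded D_def] c0[unfolded c_def e_def f_def D_def]]
    by (simp add: D_def e_def f_def c_def cx_def P_def Q_def R_def)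
  have "sff_M D X (x, 0) = Q \<bullet> frame_normal e f"
    by (simp add: sff_M_def unit_normal_frame Q_def e_def f_def)
  then have dlnM: "((\<lambda>y. ln \<bar>sff_M D X (y, 0)\<bar>) has_real_derivative
      (Q \<bullet> unit_deriv c cx + R \<bullet> frame_normal e f) / (Q \<bullet> frame_normal e f)) (at x)"
    using has_real_derivative_ln_abs[OF dM] M0 c0 by (simp add: frame_normal_def c_def)
  have dlnc: "((\<lambda>y. ln (norm (cross3 (pdx D X (y, 0)) (pdt D X (y, 0))))) has_real_derivative
      (c \<bullet> cx) / norm c / norm c) (at x)"
    using has_real_derivative_ln_abs[OF has_real_derivative_norm[OF dc]] c0 by (simp add: c_def e_def f_def)
  have "e \<noteq> 0" using c0 by (auto simp: c_def)
  then have dlnE: "((\<lambda>y. ln (pdx D X (y, 0) \<bullet> pdx D X (y, 0))) has_real_derivative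
      (e \<bullet> P + P \<bullet> e) / (e \<bullet> e)) (at x)"
    using has_real_derivative_ln_abs[OF has_real_derivative_inner[OF de de]] by (simp add: e_def)
  show ?thesis
    unfolding boundary_potential_def fff_E_def by (intro DERIV_diff DERIV_add dlnM dlnc dlnE)
qed

lemma boundary_potential_deriv:
  fixes X :: "real \<times> real \<Rightarrow> real^3" and t0 x :: real
  defines "D \<equiv> strip t0"
  assumes t0: "t0 > 0" and C3: "Ck_on 3 D X"
    and c0: "cross3 (pdx D X (x, 0)) (pdt D X (x, 0)) \<noteq> 0"
    and asymptotic: "normal_curv D X (x, 0) 1 0 = 0" and neg: "gauss_curv D X (x, 0) < 0"
  shows "(boundary_potential D X has_real_derivative
           pdt D (sff_L D X) (x, 0) / sff_M D X (x, 0)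
           + sgn (sff_M D X (x, 0)) * (geod_curv_x D X (x, 0) * normal_curv_perp D X (x, 0)
               * \<bar>gauss_curv D X (x, 0)\<bar> powr (-1/2) * norm (pdx D X (x, 0)))) (at x)"
proof -
  define e where "e = pdx D X (x, 0)"
  define f where "f = pdt D X (x, 0)"
  define P where "P = pdx D (pdx D X) (x, 0)"
  define Q where "Q = pdt D (pdx D X) (x, 0)"
  define T where "T = pdt D (pdt D X) (x, 0)"
  define R where "R = pdt D (pdx D (pdx D X)) (x, 0)"
  note frame = asymptotic_boundary_frame[OF c0 asymptotic neg, folded e_def f_def P_def Q_def]
  have L: "pdt D (sff_L D X) (x, 0) = P \<bullet> unit_deriv (cross3 e f) (cross3 e T + cross3 Q f) + R \<bullet> frame_normal e f"
    using pdt_sff_L_boundary[OF t0 C3[unfolded D_def] c0[unfolded D_def]]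
    by (simp add: D_def e_def f_def P_def Q_def T_def R_def)
  have M: "sff_M D X (x, 0) = Q \<bullet> frame_normal e f"
    by (simp add: sff_M_def unit_normal_frame Q_def e_def f_def)
  have K: "geod_curv_x D X (x, 0) * normal_curv_perp D X (x, 0) * \<bar>gauss_curv D X (x, 0)\<bar> powr (-1/2)
      * norm (pdx D X (x, 0)) = curvature_density e f P Q T"
    unfolding e_def f_def P_def Q_def T_def by (rule curvature_density_eq)
  have deriv: "(boundary_potential D X has_real_derivative
      (Q \<bullet> unit_deriv (cross3 e f) (cross3 e Q + cross3 P f) + R \<bullet> frame_normal e f) / (Q \<bullet> frame_normal e f)
      + (cross3 e f \<bullet> (cross3 e Q + cross3 P f)) / norm (cross3 e f) / norm (cross3 e f)
      - (e \<bullet> P + P \<bullet> e) / (e \<bullet> e)) (at x)"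
    using boundary_potential_jet_deriv[OF t0 C3[unfolded D_def] c0[unfolded D_def] frame(2)[unfolded e_def f_def Q_def D_def]]
    unfolding D_def e_def f_def P_def Q_def R_def .
  have "pdt D (sff_L D X) (x, 0) / sff_M D X (x, 0) + sgn (sff_M D X (x, 0)) * curvature_density e f P Q T
      = (Q \<bullet> unit_deriv (cross3 e f) (cross3 e Q + cross3 P f) + R \<bullet> frame_normal e f) / (Q \<bullet> frame_normal e f)
      + (cross3 e f \<bullet> (cross3 e Q + cross3 P f)) / norm (cross3 e f) / norm (cross3 e f)
      - (e \<bullet> P + P \<bullet> e) / (e \<bullet> e)"
    unfolding L M using asymptotic_boundary_identity[OF c0[folded e_def f_def] frame(1,2), of T R]
    by (simp add: inner_commute)
  with deriv show ?thesis unfolding K by simp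
qed

lemma boundary_potential_periodic:
  assumes t0: "t0 > 0" and C3: "Ck_on 3 (strip t0) X" and per: "x_periodic t0 x0 X"
  shows "boundary_potential (strip t0) X (x + x0) = boundary_potential (strip t0) X x"
proof -
  have C: "Ck_on (Suc (Suc (Suc 0))) (strip t0) X" using C3 by (simp add: numeral_3_eq_3)
  have per_x: "x_periodic t0 x0 (pdx (strip t0) X)" and per_t: "x_periodic t0 x0 (pdt (strip t0) X)"
    using x_periodic_partials[OF C per] by blast+
  have per_xt: "x_periodic t0 x0 (pdt (strip t0) (pdx (strip t0) X))"
    using x_periodic_partials(2)[OF Ck_on_partials(1)[OF C] per_x] .
  show ?thesis
    using per_x per_t per_xt t0
    by (simp add: x_periodic_def boundary_potential_def sff_M_def unit_normal_def fff_E_def)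
qed

lemma constant_sign_on_interval:
  fixes h :: "real \<Rightarrow> real"
  assumes cont: "continuous_on {a..b} h" and nz: "\<And>x. x \<in> {a..b} \<Longrightarrow> h x \<noteq> 0" and x: "x \<in> {a..b}"
  shows "sgn (h x) = sgn (h a)"
proof (rule ccontr)
  assume "sgn (h x) \<noteq> sgn (h a)"
  moreover have "h x \<noteq> 0" "h a \<noteq> 0" using nz x by auto
  ultimately have opposite: "h a < 0 \<and> 0 < h x \<or> h x < 0 \<and> 0 < h a"
    by (metis linorder_neqE_linordered_idom sgn_neg sgn_pos)
  have "continuous_on {a..x} h" using continuous_on_subset[OF cont] x by auto
  then obtain z where "z \<in> {a..x}" "h z = 0"
    using opposite IVT'[of h a 0 x] IVT2'[of h x 0 a] x by force
  with nz x show False by auto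
qed

lemma has_integral_derivative_of_periodic:
  fixes g g' :: "real \<Rightarrow> real"
  assumes ab: "a \<le> b" and g': "\<And>x. x \<in> {a..b} \<Longrightarrow> (g has_real_derivative g' x) (at x)" and ends: "g b = g a"
  shows "(g' has_integral 0) {a..b}"
proof -
  have "(g' has_integral g b - g a) {a..b}"
  proof (rule fundamental_theorem_of_calculus[OF ab])
    fix x assume "x \<in> {a..b}"
    then show "(g has_vector_derivative g' x) (at x within {a..b})"
      using g' has_vector_derivative_at_within
      unfolding has_real_derivative_iff_has_vector_derivative by metis
  qed
  then show ?thesis using ends by simp
qed

(* If F + s G integrates to 0, then the integrals of F and G are proportional; this also
  covers the case where neither F nor G is integrable (both integrals are then 0). *)
lemma integral_split_by_exact_part:
  fixes F G g :: "real \<Rightarrow> real"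
  assumes exact: "(g has_integral 0) I" and split: "\<And>x. x \<in> I \<Longrightarrow> F x + s * G x = g x" and s: "s \<noteq> 0"
  shows "integral I F = - s * integral I G"
proof (cases "G integrable_on I")
  case True
  have "((\<lambda>x. g x - s * G x) has_integral - s * integral I G) I"
    using has_integral_diff[OF exact has_integral_mult_right[OF integrable_integral[OF True]]] by simp
  moreover have "g x - s * G x = F x" if "x \<in> I" for x
    using split[OF that] by simp
  ultimately have "(F has_integral - s * integral I G) I"
    by (rule has_integral_eq[rotated])
  then show ?thesis by (rule integral_unique)
next
  case False
  have "\<not> F integrable_on I"
  proof
    assume "F integrable_on I"
    then have "(\<lambda>x. (g x - F x) / s) integrable_on I"
      using integrable_on_divide[OF integrable_diff[OF has_integral_integrable[OF exact]]] by blast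
    moreover have "(g x - F x) / s = G x" if "x \<in> I" for x
      using split[OF that] s by (simp add: field_simps)
    ultimately have "G integrable_on I"
      using integrable_eq by blast
    with False show False ..
  qed
  then show ?thesis using False by (simp add: not_integrable_integral)
qed

theorem mainTheorem6:
  fixes X :: "real \<times> real \<Rightarrow> real^3" and x0 t0 :: real
  assumes x0_pos: "x0 > 0" and t0_pos: "t0 > 0"
    and C3: "Ck_on 3 (strip t0) X"
    and periodic: "\<forall>x t. 0 \<le> t \<and> t < t0 \<longrightarrow> X (x + x0, t) = X (x, t)"
    and coord: "inj_on X ({0..<x0} \<times> {0..<t0})"
    and regular: "\<forall>p\<in>strip t0. cross3 (pdx (strip t0) X p) (pdt (strip t0) X p) \<noteq> 0"
    and asymptotic: "\<forall>x. normal_curv (strip t0) X (x, 0) 1 0 = 0"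
    and neg_curv: "\<forall>x. gauss_curv (strip t0) X (x, 0) < 0"
  shows "integral {0..x0} (\<lambda>x. pdt (strip t0) (sff_L (strip t0) X) (x, 0) / sff_M (strip t0) X (x, 0))
       = - sgn (sff_M (strip t0) X (0, 0)) *
         integral {0..x0} (\<lambda>x. geod_curv_x (strip t0) X (x, 0) * normal_curv_perp (strip t0) X (x, 0)
                               * \<bar>gauss_curv (strip t0) X (x, 0)\<bar> powr (-1/2) * norm (pdx (strip t0) X (x, 0)))"
proof -
  define M where "M x = sff_M (strip t0) X (x, 0)" for x
  define F1 where "F1 x = pdt (strip t0) (sff_L (strip t0) X) (x, 0) / sff_M (strip t0) X (x, 0)" for x
  define F2 where "F2 x = geod_curv_x (strip t0) X (x, 0) * normal_curv_perp (strip t0) X (x, 0)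
      * \<bar>gauss_curv (strip t0) X (x, 0)\<bar> powr (-1/2) * norm (pdx (strip t0) X (x, 0))" for x
  have regular0: "cross3 (pdx (strip t0) X (x, 0)) (pdt (strip t0) X (x, 0)) \<noteq> 0" for x
    using regular t0_pos by (simp add: strip_def)
  have deriv: "(boundary_potential (strip t0) X has_real_derivative F1 x + sgn (M x) * F2 x) (at x)" for x
    using boundary_potential_deriv[OF t0_pos C3 regular0 asymptotic[rule_format] neg_curv[rule_format]]
    unfolding F1_def F2_def M_def .
  have M0: "M x \<noteq> 0" for x
    using asymptotic_boundary_frame(3)[OF regular0 asymptotic[rule_format] neg_curv[rule_format]]
    unfolding M_def .
  have "continuous_on {0..x0} M"
    using sff_M_boundary_deriv[OF t0_pos C3 regular0] unfolding M_def
    by (meson DERIV_isCont continuous_at_imp_continuous_on)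
  then have sign: "sgn (M x) = sgn (M 0)" if "x \<in> {0..x0}" for x
    by (rule constant_sign_on_interval) (use M0 that in auto)
  have "((\<lambda>x. F1 x + sgn (M 0) * F2 x) has_integral 0) {0..x0}"
  proof (rule has_integral_derivative_of_periodic)
    show "(boundary_potential (strip t0) X has_real_derivative F1 x + sgn (M 0) * F2 x) (at x)"
      if "x \<in> {0..x0}" for x
      using deriv[of x] sign[OF that] by simp
    show "boundary_potential (strip t0) X x0 = boundary_potential (strip t0) X 0"
      using boundary_potential_periodic[OF t0_pos C3, of x0 0] periodic by (simp add: x_periodic_def)
  qed (use x0_pos in simp)
  then have "integral {0..x0} F1 = - sgn (M 0) * integral {0..x0} F2"
    by (rule integral_split_by_exact_part) (use M0[of 0] in \<open>simp_all add: sgn_0_0\<close>)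
  then show ?thesis unfolding F1_def F2_def M_def .
qed

end
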